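(* For any parameters $S_1,\dots,S_{\mathcal K}$ and $\lambda_1,\dots,\lambda_{\mathcal K}$ of the model in the context, the following are equivalent: (1) $0\in\operatorname{ri}D$; (2) the linear system \[ \sum_{j=1}^{\kappa_i}\alpha_{ij}=\lambda_i\ (i=1,\dots,\mathcal K),\qquad \sum_{i=1}^{\mathcal K}\sum_{j=1}^{\kappa_i}\alpha_{ij}\,\delta_{\ell,s^i_j}=\tfrac1n\ (\ell=1,\dots,n) \] has a positive solution $(\alpha_{ij})$ (all $\alpha_{ij}>0$).
   Context: $n$ nodes, non-empty neighborhoods $S_1,\dots,S_{\mathcal K}\subset\{1,\dots,n\}$ covering $\{1,\dots,n\}$, $\kappa_i=|S_i|$, $S_i=\{s^i_1,\dots,s^i_{\kappa_i}\}$; rates $\lambda_i>0$ with $\sum_{i=1}^{\mathcal K}\lambda_i=1$. $\Lambda_i=\{p\in\mathbb R^{\kappa_i}:p_j\ge0,\sum_jp_j=1\}$. $E:\mathbb R^{\kappa_1+\dots+\kappa_{\mathcal K}}\to\mathbb R^n$ is the linear map sending $p=(p^{(1)},\dots,p^{(\mathcal K)})$ to $x$ with $x_\ell=\sum_{i=1}^{\mathcal K}\sum_{j=1}^{\kappa_i}\lambda_ip^{(i)}_j\delta_{\ell,s^i_j}$; $F:\mathbb R^n\to\mathbb R^n$ is the linear map $F(x)_i=x_i-\frac1n\sum_{j=1}^nx_j$. $D=F(E(\Lambda_1\times\dots\times\Lambda_{\mathcal K}))$. $\operatorname{ri}A$ denotes the relative interior of $A$, i.e. the interior of $A$ regarded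 as a subset of its affine hull. $\delta_{\ell,m}$ is the Kronecker delta. *)

theory Defs
  imports "HOL-Analysis.Analysis"
begin

text \<open>Nodes are the elements of a finite type 'n (so n = CARD('n)); neighborhoods are
indexed by a finite type 'k (so K = CARD('k)).  A point of the simplex Lambda_i is
indexed directly by the elements of S_i (equivalent to indexing by j = 1..kappa_i via
the enumeration s^i_j); entries outside S_i are fixed to 0.\<close>

definition prod_simplex :: "('k::finite \<Rightarrow> 'n::finite set) \<Rightarrow> ('k \<Rightarrow> 'n \<Rightarrow> real) set" where
  "prod_simplex S = {p. \<forall>i. (\<forall>l\<in>S i. 0 \<le> p i l) \<and> (\<forall>l. l \<notin> S i \<longrightarrow> p i l = 0)
                          \<and> (\<Sum>l\<in>S i. p i l) = 1}"

definition Emap :: "('k::finite \<Rightarrow> 'n::finite set) \<Rightarrow> ('k \<Rightarrow> real) \<Rightarrow> ('k \<Rightarrow> 'n \<Rightarrow> real) \<Rightarrow> real^'n" where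
  "Emap S lam p = (\<chi> l. \<Sum>i\<in>UNIV. if l \<in> S i then lam i * p i l else 0)"

definition Fmap :: "real^'n::finite \<Rightarrow> real^'n" where
  "Fmap x = (\<chi> i. x $ i - (\<Sum>j\<in>UNIV. x $ j) / real CARD('n))"

definition Dset :: "('k::finite \<Rightarrow> 'n::finite set) \<Rightarrow> ('k \<Rightarrow> real) \<Rightarrow> (real^'n) set" where
  "Dset S lam = Fmap ` (Emap S lam ` prod_simplex S)"

end

theory Submission
  imports Defs
begin

text \<open>Put \<open>L = F \<circ> E\<close>, a linear map, so that \<open>D = L(\<Lambda>)\<close> for the product of simplices
\<open>\<Lambda>\<close>, and \<open>L p = 0\<close> says that \<open>E p\<close> is the uniform vector \<open>1/n\<close>. Via \<open>\<alpha>\<^sub>i\<^sub>j = \<lambda>\<^sub>i p\<^sub>i\<^sub>j\<close>,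
positive solutions of the system are the strictly positive \<open>p \<in> \<Lambda>\<close> with \<open>L p = 0\<close>.
Given such a \<open>p\<close> with least entry \<open>m > 0\<close>, every \<open>q \<in> \<Lambda>\<close> gives \<open>(1 + m) p - m q \<in> \<Lambda>\<close>,
so each segment from a point \<open>L q\<close> of \<open>D\<close> to \<open>0\<close> extends beyond \<open>0\<close> inside \<open>D\<close>: \<open>0 \<in> ri D\<close>.
Conversely, if \<open>0 \<in> ri D\<close>, the segment from the image of the barycentre \<open>b\<close> through \<open>0\<close>
extends to some \<open>L q\<close>, and the convex combination of \<open>b\<close> and \<open>q\<close> mapped to \<open>0\<close> has
strictly positive entries because \<open>b\<close> has.\<close>

definition FEmap :: "('k::finite \<Rightarrow> 'n::finite set) \<Rightarrow> ('k \<Rightarrow> real) \<Rightarrow> ('k \<Rightarrow> 'n \<Rightarrow> real) \<Rightarrow> real^'n"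
  where "FEmap S lam p = Fmap (Emap S lam p)"

definition barycentre :: "('k \<Rightarrow> 'n set) \<Rightarrow> 'k \<Rightarrow> 'n \<Rightarrow> real"
  where "barycentre S i l = (if l \<in> S i then 1 / real (card (S i)) else 0)"

lemma Dset_eq_image_FEmap: "Dset S lam = FEmap S lam ` prod_simplex S"
  by (auto simp: Dset_def FEmap_def)

lemma Emap_lincomb:
  "Emap S lam (\<lambda>i l. a * p i l + c * q i l) = a *\<^sub>R Emap S lam p + c *\<^sub>R Emap S lam q"
  unfolding Emap_def
  by (simp add: vec_eq_iff sum_distrib_left sum.distrib[symmetric] algebra_simps if_distrib
      cong: if_cong)

lemma Fmap_lincomb: "Fmap (a *\<^sub>R x + c *\<^sub>R y) = a *\<^sub>R Fmap x + c *\<^sub>R Fmap (y::real^'n::finite)"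
  unfolding Fmap_def
  by (simp add: vec_eq_iff sum_distrib_left sum.distrib add_divide_distrib algebra_simps
      sum_divide_distrib[symmetric])

lemma FEmap_lincomb:
  "FEmap S lam (\<lambda>i l. a * p i l + c * q i l) = a *\<^sub>R FEmap S lam p + c *\<^sub>R FEmap S lam q"
  by (simp add: FEmap_def Emap_lincomb Fmap_lincomb)

lemma Fmap_eq_0_iff:
  fixes x :: "real^'n::finite"
  shows "Fmap x = 0 \<longleftrightarrow> (\<forall>l. x $ l = (\<Sum>j\<in>UNIV. x $ j) / real CARD('n))"
  by (simp add: Fmap_def vec_eq_iff)

lemma prod_simplex_convex_comb:
  assumes "p \<in> prod_simplex S" "q \<in> prod_simplex S" "0 \<le> a" "0 \<le> c" "a + c = 1"
  shows "(\<lambda>i l. a * p i l + c * q i l) \<in> prod_simplex S"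
  using assms unfolding prod_simplex_def
  by (simp add: sum.distrib sum_distrib_left[symmetric])

lemma prod_simplex_le_1:
  assumes "p \<in> prod_simplex S" "l \<in> S i"
  shows "p i l \<le> 1"
proof -
  have "p i l \<le> (\<Sum>l\<in>S i. p i l)"
    by (rule member_le_sum) (use assms in \<open>auto simp: prod_simplex_def\<close>)
  thus ?thesis using assms by (simp add: prod_simplex_def)
qed

lemma prod_simplex_extrapolate:
  assumes "p \<in> prod_simplex S" "q \<in> prod_simplex S" "0 \<le> m"
    and "\<forall>i. \<forall>l\<in>S i. m \<le> p i l"
  shows "(\<lambda>i l. (1 + m) * p i l + (- m) * q i l) \<in> prod_simplex S"
proof -
  have "m * q i l \<le> p i l + m * p i l" if "l \<in> S i" for i l
  proof -
    have "m * q i l \<le> m" using prod_simplex_le_1[OF assms(2) that] assms(3)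
      by (simp add: mult_left_le)
    moreover have "m \<le> p i l" using assms(4) that by blast
    moreover have "0 \<le> m * p i l" using calculation(2) assms(3) by simp
    ultimately show ?thesis by linarith
  qed
  then show ?thesis using assms(1,2) unfolding prod_simplex_def
    by (simp add: algebra_simps sum.distrib sum_subtractf sum_distrib_left[symmetric])
qed

lemma barycentre_in_prod_simplex:
  assumes "\<forall>i. S i \<noteq> {}"
  shows "barycentre S \<in> prod_simplex S"
  using assms by (simp add: prod_simplex_def barycentre_def)

lemma barycentre_pos:
  assumes "l \<in> S i"
  shows "0 < barycentre S i (l::'n::finite)"
  using assms card_gt_0_iff by (fastforce simp: barycentre_def)

lemma sum_Emap_eq_1:
  fixes S :: "'k::finite \<Rightarrow> 'n::finite set"
  assumes "p \<in> prod_simplex S" "(\<Sum>i\<in>UNIV. lam i) = 1"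
  shows "(\<Sum>l\<in>UNIV. Emap S lam p $ l) = 1"
proof -
  have outside: "p i l = 0" if "l \<notin> S i" for i l using assms that by (auto simp: prod_simplex_def)
  have row: "(\<Sum>l\<in>UNIV. p i l) = 1" for i
  proof -
    have "(\<Sum>l\<in>UNIV. p i l) = (\<Sum>l\<in>S i. p i l)"
      by (rule sum.mono_neutral_right) (auto simp: outside)
    thus ?thesis using assms by (simp add: prod_simplex_def)
  qed
  have "(\<Sum>l\<in>UNIV. Emap S lam p $ l) = (\<Sum>l\<in>UNIV. \<Sum>i\<in>UNIV. lam i * p i l)"
    unfolding Emap_def by (auto intro!: sum.cong simp: outside)
  also have "\<dots> = (\<Sum>i\<in>UNIV. lam i * (\<Sum>l\<in>UNIV. p i l))"
    by (subst sum.swap) (simp add: sum_distrib_left)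
  also have "\<dots> = 1" using row assms by simp
  finally show ?thesis .
qed

lemma FEmap_eq_0_iff:
  fixes S :: "'k::finite \<Rightarrow> 'n::finite set"
  assumes "p \<in> prod_simplex S" "(\<Sum>i\<in>UNIV. lam i) = 1"
  shows "FEmap S lam p = 0 \<longleftrightarrow> (\<forall>l. Emap S lam p $ l = 1 / real CARD('n))"
  using sum_Emap_eq_1[OF assms] by (simp add: FEmap_def Fmap_eq_0_iff)

lemma convex_Dset: "convex (Dset S lam)"
proof (rule convexI)
  fix x y and u v :: real
  assume "x \<in> Dset S lam" "y \<in> Dset S lam" and uv: "0 \<le> u" "0 \<le> v" "u + v = 1"
  then obtain p q where pq: "p \<in> prod_simplex S" "q \<in> prod_simplex S"
    "x = FEmap S lam p" "y = FEmap S lam q" by (auto simp: Dset_eq_image_FEmap)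
  have "u *\<^sub>R x + v *\<^sub>R y = FEmap S lam (\<lambda>i l. u * p i l + v * q i l)"
    using pq by (simp add: FEmap_lincomb)
  moreover have "(\<lambda>i l. u * p i l + v * q i l) \<in> prod_simplex S"
    using pq uv by (intro prod_simplex_convex_comb)
  ultimately show "u *\<^sub>R x + v *\<^sub>R y \<in> Dset S lam" by (simp add: Dset_eq_image_FEmap)
qed

lemma positive_lower_bound_finite:
  assumes "finite A" "\<forall>x\<in>A. 0 < f x"
  obtains m :: real where "0 < m" "\<forall>x\<in>A. m \<le> f x"
proof
  show "0 < Min (insert 1 (f ` A))" using assms by simp
  show "\<forall>x\<in>A. Min (insert 1 (f ` A)) \<le> f x" using assms by simp
qed

lemma zero_in_rel_interior_Dset_if_positive_preimage:
  assumes "p \<in> prod_simplex S" "\<forall>i. \<forall>l\<in>S i. 0 < p i l" "FEmap S lam p = 0"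
  shows "0 \<in> rel_interior (Dset S lam)"
proof -
  obtain m where m: "0 < m" "\<forall>i. \<forall>l\<in>S i. m \<le> p i l"
    using positive_lower_bound_finite[of "Sigma UNIV S" "\<lambda>(i, l). p i l"] assms(2) by auto
  have "\<exists>e>1. (1 - e) *\<^sub>R x + e *\<^sub>R 0 \<in> Dset S lam" if x: "x \<in> Dset S lam" for x
  proof -
    obtain q where q: "q \<in> prod_simplex S" "x = FEmap S lam q"
      using x unfolding Dset_eq_image_FEmap by blast
    have "(1 - (1 + m)) *\<^sub>R x + (1 + m) *\<^sub>R 0 = FEmap S lam (\<lambda>i l. (1 + m) * p i l + (- m) * q i l)"
      unfolding FEmap_lincomb assms(3) q(2) by simp
    also have "\<dots> \<in> Dset S lam"
      using prod_simplex_extrapolate[OF assms(1) q(1)] m by (simp add: Dset_eq_image_FEmap)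
    finally show ?thesis using m(1) by (intro exI[of _ "1 + m"]) simp
  qed
  moreover have "Dset S lam \<noteq> {}" using assms(1) by (auto simp: Dset_eq_image_FEmap)
  ultimately show ?thesis by (simp add: convex_rel_interior_iff[OF convex_Dset])
qed

lemma positive_preimage_if_zero_in_rel_interior_Dset:
  assumes "0 \<in> rel_interior (Dset S lam)" "\<forall>i. S i \<noteq> {}"
  obtains p where "p \<in> prod_simplex S" "\<forall>i. \<forall>l\<in>S i. 0 < p i l" "FEmap S lam p = 0"
proof -
  let ?b = "barycentre S"
  have b: "?b \<in> prod_simplex S" using barycentre_in_prod_simplex[OF assms(2)] .
  then have "FEmap S lam ?b \<in> Dset S lam" by (simp add: Dset_eq_image_FEmap)
  then obtain e where e: "e > 1" "(1 - e) *\<^sub>R FEmap S lam ?b + e *\<^sub>R 0 \<in> Dset S lam"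
    using assms(1) convex_rel_interior_iff[OF convex_Dset, of S lam] by blast
  then obtain q where q: "q \<in> prod_simplex S" "(1 - e) *\<^sub>R FEmap S lam ?b = FEmap S lam q"
    by (auto simp: Dset_eq_image_FEmap)
  define p where "p i l = (1 / e) * q i l + ((e - 1) / e) * ?b i l" for i l
  show thesis
  proof
    show "p \<in> prod_simplex S"
      unfolding p_def using e by (intro prod_simplex_convex_comb q b) (auto simp: field_simps)
    show "\<forall>i. \<forall>l\<in>S i. 0 < p i l"
    proof (intro allI ballI)
      fix i l assume l: "l \<in> S i"
      have "0 < ((e - 1) / e) * ?b i l" using e barycentre_pos[of l S i] l by simp
      moreover have "0 \<le> (1 / e) * q i l" using e q(1) l by (simp add: prod_simplex_def)
      ultimately show "0 < p i l" unfolding p_def by linarith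
    qed
    have "FEmap S lam p = (1 / e) *\<^sub>R ((1 - e) *\<^sub>R FEmap S lam ?b) + ((e - 1) / e) *\<^sub>R FEmap S lam ?b"
      unfolding p_def FEmap_lincomb q(2) ..
    also have "\<dots> = ((1 / e) * (1 - e) + (e - 1) / e) *\<^sub>R FEmap S lam ?b"
      by (simp add: scaleR_add_left)
    also have "(1 / e) * (1 - e) + (e - 1) / e = 0" using e by (simp add: field_simps)
    finally show "FEmap S lam p = 0" by simp
  qed
qed

lemma positive_solution_iff_positive_uniform_preimage:
  fixes S :: "'k::finite \<Rightarrow> 'n::finite set"
  assumes "\<forall>i. 0 < lam i"
  shows "(\<exists>\<alpha> :: 'k \<Rightarrow> 'n \<Rightarrow> real.
        (\<forall>i. \<forall>l\<in>S i. 0 < \<alpha> i l)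
      \<and> (\<forall>i. (\<Sum>l\<in>S i. \<alpha> i l) = lam i)
      \<and> (\<forall>l. (\<Sum>i\<in>UNIV. if l \<in> S i then \<alpha> i l else 0) = 1 / real CARD('n)))
    \<longleftrightarrow> (\<exists>p\<in>prod_simplex S. (\<forall>i. \<forall>l\<in>S i. 0 < p i l)
      \<and> (\<forall>l. Emap S lam p $ l = 1 / real CARD('n)))"
    (is "(\<exists>\<alpha>. ?pos \<alpha> \<and> ?rows \<alpha> \<and> ?cols \<alpha>) \<longleftrightarrow> _")
proof
  assume "\<exists>\<alpha>. ?pos \<alpha> \<and> ?rows \<alpha> \<and> ?cols \<alpha>"
  then obtain \<alpha> where \<alpha>: "?pos \<alpha>" "?rows \<alpha>" "?cols \<alpha>" by blast
  define p where "p i l = (if l \<in> S i then \<alpha> i l / lam i else 0)" for i l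
  have "(\<Sum>l\<in>S i. p i l) = 1" for i
    using \<alpha>(2) assms by (simp add: p_def sum_divide_distrib[symmetric] less_imp_neq[symmetric])
  then have "p \<in> prod_simplex S"
    using \<alpha>(1) assms by (auto simp: prod_simplex_def p_def less_imp_le)
  moreover have "Emap S lam p $ l = 1 / real CARD('n)" for l
    using \<alpha>(3) assms by (simp add: Emap_def p_def less_imp_neq[symmetric] cong: if_cong)
  moreover have "\<forall>i. \<forall>l\<in>S i. 0 < p i l" using \<alpha>(1) assms by (simp add: p_def)
  ultimately show "\<exists>p\<in>prod_simplex S. (\<forall>i. \<forall>l\<in>S i. 0 < p i l)
      \<and> (\<forall>l. Emap S lam p $ l = 1 / real CARD('n))"
    by blast
next
  assume "\<exists>p\<in>prod_simplex S. (\<forall>i. \<forall>l\<in>S i. 0 < p i l)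
      \<and> (\<forall>l. Emap S lam p $ l = 1 / real CARD('n))"
  then obtain p where p: "p \<in> prod_simplex S" "\<forall>i. \<forall>l\<in>S i. 0 < p i l"
    "\<forall>l. Emap S lam p $ l = 1 / real CARD('n)" by blast
  have "?pos (\<lambda>i l. lam i * p i l)" using p(2) assms by simp
  moreover have "?rows (\<lambda>i l. lam i * p i l)"
    using p(1) by (simp add: sum_distrib_left[symmetric] prod_simplex_def)
  moreover have "?cols (\<lambda>i l. lam i * p i l)" using p(3) by (simp add: Emap_def)
  ultimately show "\<exists>\<alpha>. ?pos \<alpha> \<and> ?rows \<alpha> \<and> ?cols \<alpha>" by (intro exI conjI)
qed

theorem lemma3p5:
  fixes S :: "'k::finite \<Rightarrow> 'n::finite set" and lam :: "'k \<Rightarrow> real"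
  assumes "\<forall>i. S i \<noteq> {}"
    and "(\<Union>i. S i) = UNIV"
    and "\<forall>i. 0 < lam i"
    and "(\<Sum>i\<in>UNIV. lam i) = 1"
  shows "(0 \<in> rel_interior (Dset S lam)) \<longleftrightarrow>
    (\<exists>\<alpha> :: 'k \<Rightarrow> 'n \<Rightarrow> real.
        (\<forall>i. \<forall>l\<in>S i. 0 < \<alpha> i l)
      \<and> (\<forall>i. (\<Sum>l\<in>S i. \<alpha> i l) = lam i)
      \<and> (\<forall>l. (\<Sum>i\<in>UNIV. if l \<in> S i then \<alpha> i l else 0) = 1 / real CARD('n)))"
proof -
  have "0 \<in> rel_interior (Dset S lam) \<longleftrightarrow>
      (\<exists>p\<in>prod_simplex S. (\<forall>i. \<forall>l\<in>S i. 0 < p i l) \<and> FEmap S lam p = 0)"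
    using zero_in_rel_interior_Dset_if_positive_preimage
      positive_preimage_if_zero_in_rel_interior_Dset[OF _ assms(1)] by metis
  also have "\<dots> \<longleftrightarrow> (\<exists>p\<in>prod_simplex S. (\<forall>i. \<forall>l\<in>S i. 0 < p i l)
      \<and> (\<forall>l. Emap S lam p $ l = 1 / real CARD('n)))"
    using FEmap_eq_0_iff[OF _ assms(4)] by blast
  also note positive_solution_iff_positive_uniform_preimage[OF assms(3), symmetric]
  finally show ?thesis .
qed

end
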